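(* Let $(X,\mathcal{E})$ be an unbounded discrete ballean such that any two distinct ultrafilters from $X^\sharp$ are incomparable. Then $(X,\mathcal{E})$ is relatively maximal, i.e. there is no coarse structure $\mathcal{E}'$ on $X$ with $\mathcal{E}\subsetneq\mathcal{E}'$ having the same bounded sets as $\mathcal{E}$.
   Context: A ballean $(X,\mathcal{E})$ is a set with a coarse structure. $E[x]=\{y:(x,y)\in E\}$. $Y$ is bounded if $Y\subseteq E[x]$ for some $x$ and $E\in\mathcal{E}$. The ballean is discrete if for every $E\in\mathcal{E}$ there is a bounded $B$ with $E[x]=\{x\}$ for all $x\in X\setminus B$. With $X$ discrete, $\beta X$ is the set of ultrafilters on $X$ and $X^\sharp$ is the set of ultrafilters all of whose members are unbounded. For $f:X\to X$, $f^\beta:\beta X\to\beta X$ is its extension, $f^\beta(p)$ being the ultrafilter generated by $\{f(P):P\in p\}$. Ultrafilters $p,q$ are incomparable if $f^\beta(p)\neq q$ and $f^\beta(q)\neq p$ for every $f:X\to X$. A ballean is relatively maximal if $\mathcal{E}$ is the largest coarse structure on $X$ whose bounded sets are exactly the bounded sets of $(X,\mathcal{E})$. *)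

theory Defs
  imports Main
begin

definition coarse_structure :: "'a set \<Rightarrow> ('a \<times> 'a) set set \<Rightarrow> bool" where
  "coarse_structure X \<E> \<longleftrightarrow>
     (\<forall>E\<in>\<E>. E \<subseteq> X \<times> X) \<and>
     Id_on X \<in> \<E> \<and>
     (\<forall>E\<in>\<E>. Id_on X \<subseteq> E) \<and>
     (\<forall>E\<in>\<E>. \<forall>E'\<in>\<E>. E O E' \<in> \<E>) \<and>
     (\<forall>E\<in>\<E>. E\<inverse> \<in> \<E>) \<and>
     (\<forall>E\<in>\<E>. \<forall>E'. Id_on X \<subseteq> E' \<and> E' \<subseteq> E \<longrightarrow> E' \<in> \<E>) \<and>
     (\<forall>x\<in>X. \<forall>y\<in>X. \<exists>E\<in>\<E>. (x, y) \<in> E)"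

definition ball_at :: "('a \<times> 'a) set \<Rightarrow> 'a \<Rightarrow> 'a set" where
  "ball_at E x = {y. (x, y) \<in> E}"

definition bounded_in :: "'a set \<Rightarrow> ('a \<times> 'a) set set \<Rightarrow> 'a set \<Rightarrow> bool" where
  "bounded_in X \<E> Y \<longleftrightarrow> (\<exists>x\<in>X. \<exists>E\<in>\<E>. Y \<subseteq> ball_at E x)"

definition discrete_ballean :: "'a set \<Rightarrow> ('a \<times> 'a) set set \<Rightarrow> bool" where
  "discrete_ballean X \<E> \<longleftrightarrow>
     (\<forall>E\<in>\<E>. \<exists>B. B \<subseteq> X \<and> bounded_in X \<E> B \<and> (\<forall>x\<in>X - B. ball_at E x = {x}))"

definition ultrafilter_on :: "'a set \<Rightarrow> 'a set set \<Rightarrow> bool" where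
  "ultrafilter_on X p \<longleftrightarrow>
     (\<forall>A\<in>p. A \<subseteq> X) \<and> X \<in> p \<and> {} \<notin> p \<and>
     (\<forall>A\<in>p. \<forall>B\<in>p. A \<inter> B \<in> p) \<and>
     (\<forall>A\<in>p. \<forall>B. A \<subseteq> B \<and> B \<subseteq> X \<longrightarrow> B \<in> p) \<and>
     (\<forall>A. A \<subseteq> X \<longrightarrow> A \<in> p \<or> X - A \<in> p)"

definition sharp_ultrafilters :: "'a set \<Rightarrow> ('a \<times> 'a) set set \<Rightarrow> 'a set set set" where
  "sharp_ultrafilters X \<E> =
     {p. ultrafilter_on X p \<and> (\<forall>P\<in>p. \<not> bounded_in X \<E> P)}"

definition beta_ext :: "'a set \<Rightarrow> ('a \<Rightarrow> 'a) \<Rightarrow> 'a set set \<Rightarrow> 'a set set" where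
  "beta_ext X f p = {A. A \<subseteq> X \<and> (\<exists>P\<in>p. f ` P \<subseteq> A)}"

definition incomparable :: "'a set \<Rightarrow> 'a set set \<Rightarrow> 'a set set \<Rightarrow> bool" where
  "incomparable X p q \<longleftrightarrow>
     (\<forall>f. f ` X \<subseteq> X \<longrightarrow> beta_ext X f p \<noteq> q \<and> beta_ext X f q \<noteq> p)"

definition relatively_maximal :: "'a set \<Rightarrow> ('a \<times> 'a) set set \<Rightarrow> bool" where
  "relatively_maximal X \<E> \<longleftrightarrow>
     (\<forall>\<E>'. coarse_structure X \<E>' \<and> (\<forall>Y. Y \<subseteq> X \<longrightarrow> (bounded_in X \<E>' Y \<longleftrightarrow> bounded_in X \<E> Y))
        \<longrightarrow> \<E>' \<subseteq> \<E>)"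

end

theory Submission
  imports Defs
begin

text \<open>
  Let \<open>\<E>'\<close> be a coarse structure with the same bounded sets, \<open>E \<in> \<E>'\<close>, and \<open>D\<close> the
  set of points moved by \<open>G = E \<union> E\<inverse>\<close>. If \<open>D\<close> were unbounded it would belong to some
  \<open>p \<in> X\<^sup>\<sharp>\<close>. Choosing for each point of \<open>D\<close> a different \<open>G\<close>-neighbour splits \<open>D\<close> into
  three sets, each of which is moved off itself by a self-map \<open>g\<close> of \<open>X\<close> that is
  \<open>G\<close>-close to the identity (Katetov's three-set lemma). One of them lies in \<open>p\<close>, so
  \<open>g\<^sup>\<beta>(p) \<noteq> p\<close>; and since \<open>g\<close> is \<open>\<E>'\<close>-close to the identity, \<open>g\<^sup>\<beta>(p)\<close> is again in
  \<open>X\<^sup>\<sharp>\<close>, contradicting incomparability. Hence \<open>D\<close> is bounded, and then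
  \<open>E \<subseteq> Id_on X \<union> D \<times> D\<close> belongs to \<open>\<E>\<close>.
\<close>

context
  fixes X :: "'a set" and \<E> :: "('a \<times> 'a) set set"
  assumes cs: "coarse_structure X \<E>"
begin

lemma coarse_structure_subset: "E \<in> \<E> \<Longrightarrow> E \<subseteq> X \<times> X"
  using cs unfolding coarse_structure_def by (elim conjE) blast

lemma coarse_structure_Id_on: "Id_on X \<in> \<E>"
  using cs unfolding coarse_structure_def by (elim conjE)

lemma coarse_structure_Id_on_subset: "E \<in> \<E> \<Longrightarrow> Id_on X \<subseteq> E"
  using cs unfolding coarse_structure_def by (elim conjE) blast

lemma coarse_structure_relcomp: "E \<in> \<E> \<Longrightarrow> E' \<in> \<E> \<Longrightarrow> E O E' \<in> \<E>"
  using cs unfolding coarse_structure_def by (elim conjE) blast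

lemma coarse_structure_converse: "E \<in> \<E> \<Longrightarrow> E\<inverse> \<in> \<E>"
  using cs unfolding coarse_structure_def by (elim conjE) blast

lemma coarse_structure_downward_closed:
  assumes "E \<in> \<E>" "Id_on X \<subseteq> E'" "E' \<subseteq> E"
  shows "E' \<in> \<E>"
  using cs assms unfolding coarse_structure_def by metis

lemma coarse_structure_connected: "x \<in> X \<Longrightarrow> y \<in> X \<Longrightarrow> \<exists>E\<in>\<E>. (x, y) \<in> E"
  using cs unfolding coarse_structure_def by metis

lemma coarse_structure_Un:
  assumes "E \<in> \<E>" "E' \<in> \<E>"
  shows "E \<union> E' \<in> \<E>"
proof (rule coarse_structure_downward_closed[OF coarse_structure_relcomp[OF assms]])
  show "Id_on X \<subseteq> E \<union> E'"
    using coarse_structure_Id_on_subset[OF \<open>E \<in> \<E>\<close>] by blast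
  have "E \<subseteq> E O Id_on X" "E' \<subseteq> Id_on X O E'"
    using coarse_structure_subset assms by auto
  then show "E \<union> E' \<subseteq> E O E'"
    using coarse_structure_Id_on_subset assms by blast
qed

lemma bounded_in_empty: "X \<noteq> {} \<Longrightarrow> bounded_in X \<E> {}"
  unfolding bounded_in_def using coarse_structure_Id_on by blast

lemma bounded_in_Un:
  assumes "bounded_in X \<E> A" "bounded_in X \<E> B"
  shows "bounded_in X \<E> (A \<union> B)"
proof -
  obtain x E where "x \<in> X" "E \<in> \<E>" "A \<subseteq> ball_at E x"
    using \<open>bounded_in X \<E> A\<close> unfolding bounded_in_def by blast
  moreover obtain y F where "y \<in> X" "F \<in> \<E>" "B \<subseteq> ball_at F y"
    using \<open>bounded_in X \<E> B\<close> unfolding bounded_in_def by blast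
  moreover obtain H where "H \<in> \<E>" "(x, y) \<in> H"
    using coarse_structure_connected[OF \<open>x \<in> X\<close> \<open>y \<in> X\<close>] by blast
  ultimately have "E \<union> H O F \<in> \<E>" "A \<union> B \<subseteq> ball_at (E \<union> H O F) x"
    using coarse_structure_Un coarse_structure_relcomp unfolding ball_at_def by blast+
  with \<open>x \<in> X\<close> show ?thesis
    unfolding bounded_in_def by blast
qed

lemma bounded_in_image_close:
  assumes "G \<in> \<E>" "\<forall>x\<in>P. (g x, x) \<in> G" "bounded_in X \<E> (g ` P)"
  shows "bounded_in X \<E> P"
proof -
  obtain x E where "x \<in> X" "E \<in> \<E>" "g ` P \<subseteq> ball_at E x"
    using \<open>bounded_in X \<E> (g ` P)\<close> unfolding bounded_in_def by blast
  then have "E O G \<in> \<E>" "P \<subseteq> ball_at (E O G) x"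
    using coarse_structure_relcomp assms(1,2) unfolding ball_at_def by blast+
  with \<open>x \<in> X\<close> show ?thesis
    unfolding bounded_in_def by blast
qed

lemma entourage_in_if_off_diagonal_bounded:
  assumes "Id_on X \<subseteq> F" "F \<subseteq> Id_on X \<union> D \<times> D" "bounded_in X \<E> D"
  shows "F \<in> \<E>"
proof -
  obtain x E where "E \<in> \<E>" "D \<subseteq> ball_at E x"
    using \<open>bounded_in X \<E> D\<close> unfolding bounded_in_def by blast
  then have "E\<inverse> O E \<in> \<E>" "D \<times> D \<subseteq> E\<inverse> O E"
    using coarse_structure_relcomp coarse_structure_converse unfolding ball_at_def by blast+
  moreover have "Id_on X \<subseteq> E\<inverse> O E"
    using coarse_structure_Id_on_subset[OF \<open>E\<inverse> O E \<in> \<E>\<close>] .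
  ultimately show ?thesis
    using coarse_structure_downward_closed assms(1,2) by (meson le_sup_iff subset_trans)
qed

end

lemma bounded_in_subset: "bounded_in X \<E> A \<Longrightarrow> B \<subseteq> A \<Longrightarrow> bounded_in X \<E> B"
  unfolding bounded_in_def by blast

definition proper_filter_on :: "'a set \<Rightarrow> 'a set set \<Rightarrow> bool" where
  "proper_filter_on X F \<longleftrightarrow>
     (\<forall>A\<in>F. A \<subseteq> X) \<and> X \<in> F \<and> {} \<notin> F \<and>
     (\<forall>A\<in>F. \<forall>B\<in>F. A \<inter> B \<in> F) \<and>
     (\<forall>A\<in>F. \<forall>B. A \<subseteq> B \<and> B \<subseteq> X \<longrightarrow> B \<in> F)"

lemma ultrafilter_on_iff:
  "ultrafilter_on X p \<longleftrightarrow> proper_filter_on X p \<and> (\<forall>A. A \<subseteq> X \<longrightarrow> A \<in> p \<or> X - A \<in> p)"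
  unfolding ultrafilter_on_def proper_filter_on_def by (simp only: conj_assoc)

context
  fixes X :: "'a set" and F :: "'a set set"
  assumes F: "proper_filter_on X F"
begin

lemma proper_filter_on_subset: "A \<in> F \<Longrightarrow> A \<subseteq> X"
  using F unfolding proper_filter_on_def by (elim conjE) blast

lemma proper_filter_on_space: "X \<in> F"
  using F unfolding proper_filter_on_def by (elim conjE)

lemma proper_filter_on_empty: "{} \<notin> F"
  using F unfolding proper_filter_on_def by (elim conjE)

lemma proper_filter_on_Int: "A \<in> F \<Longrightarrow> B \<in> F \<Longrightarrow> A \<inter> B \<in> F"
  using F unfolding proper_filter_on_def by (elim conjE) blast

lemma proper_filter_on_mono: "A \<in> F \<Longrightarrow> A \<subseteq> B \<Longrightarrow> B \<subseteq> X \<Longrightarrow> B \<in> F"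
  using F unfolding proper_filter_on_def by metis

lemma proper_filter_on_adjoin:
  assumes "A \<subseteq> X" "\<forall>B\<in>F. B \<inter> A \<noteq> {}"
  shows "proper_filter_on X {C. C \<subseteq> X \<and> (\<exists>B\<in>F. B \<inter> A \<subseteq> C)}"
  unfolding proper_filter_on_def
proof (intro conjI ballI allI impI)
  show "X \<in> {C. C \<subseteq> X \<and> (\<exists>B\<in>F. B \<inter> A \<subseteq> C)}"
    using proper_filter_on_space by blast
  show "{} \<notin> {C. C \<subseteq> X \<and> (\<exists>B\<in>F. B \<inter> A \<subseteq> C)}"
    using assms(2) by blast
  show "C \<inter> D \<in> {C. C \<subseteq> X \<and> (\<exists>B\<in>F. B \<inter> A \<subseteq> C)}"
    if CD: "C \<in> {C. C \<subseteq> X \<and> (\<exists>B\<in>F. B \<inter> A \<subseteq> C)}" "D \<in> {C. C \<subseteq> X \<and> (\<exists>B\<in>F. B \<inter> A \<subseteq> C)}"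
    for C D
  proof -
    obtain B B' where "B \<in> F" "B \<inter> A \<subseteq> C" "B' \<in> F" "B' \<inter> A \<subseteq> D" "C \<subseteq> X"
      using CD by blast
    then have "B \<inter> B' \<in> F" "B \<inter> B' \<inter> A \<subseteq> C \<inter> D"
      using proper_filter_on_Int by blast+
    with \<open>C \<subseteq> X\<close> show ?thesis
      by blast
  qed
qed blast+

end

lemma proper_filter_on_Union_chain:
  assumes "C \<noteq> {}" "\<forall>F\<in>C. proper_filter_on X F" "\<forall>F\<in>C. \<forall>G\<in>C. F \<subseteq> G \<or> G \<subseteq> F"
  shows "proper_filter_on X (\<Union>C)"
  unfolding proper_filter_on_def
proof (intro conjI ballI allI impI)
  show "A \<subseteq> X" if "A \<in> \<Union>C" for A
    using that assms(2) proper_filter_on_subset by blast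
  show "{} \<notin> \<Union>C"
    using assms(2) proper_filter_on_empty by blast
  show "B \<in> \<Union>C" if "A \<in> \<Union>C" "A \<subseteq> B \<and> B \<subseteq> X" for A B
    using that assms(2) proper_filter_on_mono by blast
  show "X \<in> \<Union>C"
    using assms(1,2) proper_filter_on_space by blast
  show "A \<inter> B \<in> \<Union>C" if AB: "A \<in> \<Union>C" "B \<in> \<Union>C" for A B
  proof -
    obtain F G where "F \<in> C" "A \<in> F" "G \<in> C" "B \<in> G"
      using AB by blast
    with assms(3) have "A \<in> F \<union> G" "B \<in> F \<union> G" "F \<union> G \<in> C"
      by (metis Un_absorb1 Un_absorb2 UnI1 UnI2)+
    then show ?thesis
      using proper_filter_on_Int assms(2) by blast
  qed
qed

lemma proper_filter_on_extends_to_ultrafilter: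
  assumes "proper_filter_on X F"
  obtains p where "ultrafilter_on X p" "F \<subseteq> p"
proof -
  have "\<exists>M\<in>{G. proper_filter_on X G \<and> F \<subseteq> G}. \<forall>G\<in>{G. proper_filter_on X G \<and> F \<subseteq> G}. M \<subseteq> G \<longrightarrow> G = M"
  proof (rule subset_Zorn_nonempty)
    fix C assume "C \<noteq> {}" "subset.chain {G. proper_filter_on X G \<and> F \<subseteq> G} C"
    then show "\<Union>C \<in> {G. proper_filter_on X G \<and> F \<subseteq> G}"
      using proper_filter_on_Union_chain[of C X] unfolding subset_chain_def by blast
  qed (use assms in blast)
  then obtain M where M: "proper_filter_on X M" "F \<subseteq> M"
    and max: "\<And>G. proper_filter_on X G \<Longrightarrow> F \<subseteq> G \<Longrightarrow> M \<subseteq> G \<Longrightarrow> G = M"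
    unfolding Bex_def Ball_def mem_Collect_eq by metis
  have "A \<in> M \<or> X - A \<in> M" if "A \<subseteq> X" for A
  proof (cases "\<forall>B\<in>M. B \<inter> A \<noteq> {}")
    case True
    let ?M' = "{C. C \<subseteq> X \<and> (\<exists>B\<in>M. B \<inter> A \<subseteq> C)}"
    have "M \<subseteq> ?M'"
      using proper_filter_on_subset[OF M(1)] by blast
    then have "?M' = M"
      using max[OF proper_filter_on_adjoin[OF M(1) that True]] M(2) by blast
    then show ?thesis
      using proper_filter_on_space[OF M(1)] that by blast
  next
    case False
    then obtain B where "B \<in> M" "B \<subseteq> X - A"
      using proper_filter_on_subset[OF M(1)] by blast
    then show ?thesis
      using proper_filter_on_mono[OF M(1)] by blast
  qed
  with M that show ?thesis
    unfolding ultrafilter_on_iff by blast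
qed

lemma ultrafilter_on_proper: "ultrafilter_on X p \<Longrightarrow> proper_filter_on X p"
  unfolding ultrafilter_on_iff by blast

lemma ultrafilter_on_compl: "ultrafilter_on X p \<Longrightarrow> A \<subseteq> X \<Longrightarrow> A \<in> p \<or> X - A \<in> p"
  unfolding ultrafilter_on_iff by blast

lemma ultrafilter_on_Un:
  assumes p: "ultrafilter_on X p" and "A \<union> B \<in> p" "A \<subseteq> X" "B \<subseteq> X"
  shows "A \<in> p \<or> B \<in> p"
proof (rule ccontr)
  assume "\<not> (A \<in> p \<or> B \<in> p)"
  then have "X - A \<in> p" "X - B \<in> p"
    using ultrafilter_on_compl[OF p] assms(3,4) by blast+
  then have "(A \<union> B) \<inter> ((X - A) \<inter> (X - B)) \<in> p"
    using proper_filter_on_Int[OF ultrafilter_on_proper[OF p]] \<open>A \<union> B \<in> p\<close> by blast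
  moreover have "(A \<union> B) \<inter> ((X - A) \<inter> (X - B)) = {}"
    by blast
  ultimately show False
    using proper_filter_on_empty[OF ultrafilter_on_proper[OF p]] by simp
qed

lemma unbounded_subset_in_sharp_ultrafilter:
  assumes cs: "coarse_structure X \<E>" and "X \<noteq> {}" "D \<subseteq> X" "\<not> bounded_in X \<E> D"
  obtains p where "p \<in> sharp_ultrafilters X \<E>" "D \<in> p"
proof -
  let ?F = "{A. A \<subseteq> X \<and> bounded_in X \<E> (D - A)}"
  have "proper_filter_on X ?F"
    unfolding proper_filter_on_def
  proof (intro conjI ballI allI impI)
    have "D - X = {}"
      using \<open>D \<subseteq> X\<close> by blast
    then show "X \<in> ?F"
      using bounded_in_empty[OF cs \<open>X \<noteq> {}\<close>] by (metis mem_Collect_eq subset_refl)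
    show "{} \<notin> ?F"
      using \<open>\<not> bounded_in X \<E> D\<close> by simp
    show "A \<inter> B \<in> ?F" if "A \<in> ?F" "B \<in> ?F" for A B
      using that bounded_in_Un[OF cs, of "D - A" "D - B"] by (simp add: Diff_Int le_infI1)
    show "B \<in> ?F" if "A \<in> ?F" "A \<subseteq> B \<and> B \<subseteq> X" for A B
      using that bounded_in_subset[of X \<E> "D - A" "D - B"] by blast
  qed blast
  then obtain p where p: "ultrafilter_on X p" "?F \<subseteq> p"
    by (rule proper_filter_on_extends_to_ultrafilter)
  have "D \<in> p"
    using p(2) bounded_in_empty[OF cs \<open>X \<noteq> {}\<close>] \<open>D \<subseteq> X\<close> by auto
  moreover have "\<not> bounded_in X \<E> P" if "P \<in> p" for P
  proof
    assume "bounded_in X \<E> P"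
    moreover have "D - (X - P) \<subseteq> P"
      using \<open>D \<subseteq> X\<close> by blast
    ultimately have "X - P \<in> ?F"
      using bounded_in_subset by simp
    then have "X - P \<in> p"
      using p(2) by blast
    then have "P \<inter> (X - P) \<in> p"
      using proper_filter_on_Int[OF ultrafilter_on_proper[OF p(1)] \<open>P \<in> p\<close>] by blast
    then show False
      using proper_filter_on_empty[OF ultrafilter_on_proper[OF p(1)]] by simp
  qed
  ultimately show ?thesis
    using that p(1) unfolding sharp_ultrafilters_def by blast
qed

lemma ultrafilter_on_beta_ext:
  assumes p: "ultrafilter_on X p" and "g ` X \<subseteq> X"
  shows "ultrafilter_on X (beta_ext X g p)"
  unfolding ultrafilter_on_iff proper_filter_on_def
proof (intro conjI ballI allI impI)
  note pf = ultrafilter_on_proper[OF p]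
  show "X \<in> beta_ext X g p"
    using proper_filter_on_space[OF pf] assms(2) unfolding beta_ext_def by blast
  show "{} \<notin> beta_ext X g p"
    using proper_filter_on_empty[OF pf] unfolding beta_ext_def by auto
  show "A \<inter> B \<in> beta_ext X g p" if AB: "A \<in> beta_ext X g p" "B \<in> beta_ext X g p" for A B
  proof -
    obtain P where "P \<in> p" "g ` P \<subseteq> A" "A \<subseteq> X"
      using AB(1) unfolding beta_ext_def by blast
    moreover obtain Q where "Q \<in> p" "g ` Q \<subseteq> B"
      using AB(2) unfolding beta_ext_def by blast
    ultimately have "P \<inter> Q \<in> p" "g ` (P \<inter> Q) \<subseteq> A \<inter> B" "A \<inter> B \<subseteq> X"
      using proper_filter_on_Int[OF pf] by blast+
    then show ?thesis
      unfolding beta_ext_def by blast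
  qed
  show "A \<in> beta_ext X g p \<or> X - A \<in> beta_ext X g p" if "A \<subseteq> X" for A
  proof -
    have "g ` (X \<inter> g -` A) \<subseteq> A" "g ` (X - X \<inter> g -` A) \<subseteq> X - A"
      using assms(2) by blast+
    moreover have "X \<inter> g -` A \<in> p \<or> X - X \<inter> g -` A \<in> p"
      using ultrafilter_on_compl[OF p] by blast
    ultimately show ?thesis
      using that unfolding beta_ext_def by blast
  qed
qed (auto simp: beta_ext_def)

lemma beta_ext_neq:
  assumes p: "ultrafilter_on X p" and "g ` X \<subseteq> X" "P \<in> p" "g ` P \<inter> P = {}"
  shows "beta_ext X g p \<noteq> p"
proof
  assume "beta_ext X g p = p"
  moreover have "g ` P \<in> beta_ext X g p"
    using proper_filter_on_subset[OF ultrafilter_on_proper[OF p] \<open>P \<in> p\<close>] assms(2,3)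
    unfolding beta_ext_def by blast
  ultimately have "g ` P \<inter> P \<in> p"
    using proper_filter_on_Int[OF ultrafilter_on_proper[OF p]] \<open>P \<in> p\<close> by simp
  then show False
    using proper_filter_on_empty[OF ultrafilter_on_proper[OF p]] assms(4) by simp
qed

definition displaceable :: "'a set \<Rightarrow> ('a \<times> 'a) set \<Rightarrow> 'a set \<Rightarrow> bool" where
  "displaceable X G A \<longleftrightarrow> (\<exists>g. g ` X \<subseteq> X \<and> (\<forall>x\<in>X. (g x, x) \<in> G) \<and> g ` A \<inter> A = {})"

lemma displaceableI:
  assumes "Id_on X \<subseteq> G" "A \<subseteq> X" "\<forall>x\<in>A. k x \<in> X \<and> (k x, x) \<in> G" "k ` A \<inter> A = {}"
  shows "displaceable X G A"
  unfolding displaceable_def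
proof (intro exI conjI)
  let ?g = "\<lambda>x. if x \<in> A then k x else x"
  show "?g ` X \<subseteq> X" "\<forall>x\<in>X. (?g x, x) \<in> G"
    using assms(1,3) by auto
  have "?g ` A = k ` A"
    by simp
  with assms(4) show "?g ` A \<inter> A = {}"
    by simp
qed

lemma beta_ext_sharp:
  assumes cs': "coarse_structure X \<E>'"
    and same: "\<forall>Y. Y \<subseteq> X \<longrightarrow> (bounded_in X \<E>' Y \<longleftrightarrow> bounded_in X \<E> Y)"
    and "G \<in> \<E>'" "g ` X \<subseteq> X" "\<forall>x\<in>X. (g x, x) \<in> G"
    and p: "p \<in> sharp_ultrafilters X \<E>"
  shows "beta_ext X g p \<in> sharp_ultrafilters X \<E>"
proof -
  have up: "ultrafilter_on X p" and unbounded: "\<And>P. P \<in> p \<Longrightarrow> \<not> bounded_in X \<E> P"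
    using p unfolding sharp_ultrafilters_def by auto
  have "\<not> bounded_in X \<E> Q" if Q: "Q \<in> beta_ext X g p" for Q
  proof
    assume "bounded_in X \<E> Q"
    obtain P where "P \<in> p" "g ` P \<subseteq> Q" "Q \<subseteq> X"
      using Q unfolding beta_ext_def by blast
    have "P \<subseteq> X"
      using proper_filter_on_subset[OF ultrafilter_on_proper[OF up] \<open>P \<in> p\<close>] .
    have "bounded_in X \<E>' (g ` P)"
      using same \<open>Q \<subseteq> X\<close> \<open>bounded_in X \<E> Q\<close> bounded_in_subset \<open>g ` P \<subseteq> Q\<close> by blast
    then have "bounded_in X \<E>' P"
      using bounded_in_image_close[OF cs' \<open>G \<in> \<E>'\<close>] assms(5) \<open>P \<subseteq> X\<close> by blast
    then show False
      using same \<open>P \<subseteq> X\<close> unbounded[OF \<open>P \<in> p\<close>] by blast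
  qed
  with ultrafilter_on_beta_ext[OF up \<open>g ` X \<subseteq> X\<close>] show ?thesis
    unfolding sharp_ultrafilters_def by blast
qed

lemma sharp_ultrafilter_not_displaceable:
  assumes cs': "coarse_structure X \<E>'"
    and same: "\<forall>Y. Y \<subseteq> X \<longrightarrow> (bounded_in X \<E>' Y \<longleftrightarrow> bounded_in X \<E> Y)"
    and inc: "\<forall>p\<in>sharp_ultrafilters X \<E>. \<forall>q\<in>sharp_ultrafilters X \<E>. p \<noteq> q \<longrightarrow> incomparable X p q"
    and "G \<in> \<E>'" and p: "p \<in> sharp_ultrafilters X \<E>" and "A \<in> p"
  shows "\<not> displaceable X G A"
proof
  assume "displaceable X G A"
  then obtain g where g: "g ` X \<subseteq> X" "\<forall>x\<in>X. (g x, x) \<in> G" "g ` A \<inter> A = {}"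
    unfolding displaceable_def by blast
  have "beta_ext X g p \<in> sharp_ultrafilters X \<E>"
    using beta_ext_sharp[OF cs' same \<open>G \<in> \<E>'\<close> g(1,2) p] .
  moreover have "beta_ext X g p \<noteq> p"
    using p beta_ext_neq[OF _ g(1) \<open>A \<in> p\<close> g(3)] unfolding sharp_ultrafilters_def by blast
  ultimately have "incomparable X p (beta_ext X g p)"
    using inc p by metis
  with g(1) show False
    unfolding incomparable_def by blast
qed

lemma fixpoint_free_three_cover:
  assumes "\<forall>x\<in>D. f x \<noteq> x"
  obtains M where "M \<subseteq> D" "M \<inter> f ` M = {}" "D \<subseteq> M \<union> f -` M \<union> f ` M"
proof -
  let ?\<M> = "{M. M \<subseteq> D \<and> M \<inter> f ` M = {}}"
  have "\<forall>C\<in>chains ?\<M>. \<Union>C \<in> ?\<M>"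
  proof
    fix C assume C: "C \<in> chains ?\<M>"
    have "\<Union>C \<inter> f ` \<Union>C = {}"
    proof (rule ccontr)
      assume "\<Union>C \<inter> f ` \<Union>C \<noteq> {}"
      then obtain x y M M' where "x \<in> M" "M \<in> C" "y \<in> M'" "M' \<in> C" "x = f y"
        by blast
      moreover have "M \<subseteq> M' \<or> M' \<subseteq> M"
        using chainsD[OF C \<open>M \<in> C\<close> \<open>M' \<in> C\<close>] .
      ultimately show False
        using chainsD2[OF C] by blast
    qed
    then show "\<Union>C \<in> ?\<M>"
      using chainsD2[OF C] by blast
  qed
  then obtain M where "M \<in> ?\<M>" and max: "\<forall>M'\<in>?\<M>. M \<subseteq> M' \<longrightarrow> M' = M"
    by (rule Zorn_Lemma[THEN bexE])
  have "x \<in> M \<union> f -` M \<union> f ` M" if "x \<in> D" for x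
  proof (rule ccontr)
    assume "x \<notin> M \<union> f -` M \<union> f ` M"
    then have "insert x M \<in> ?\<M>"
      using \<open>M \<in> ?\<M>\<close> \<open>x \<in> D\<close> assms by auto
    then have "insert x M = M"
      using max by blast
    then show False
      using \<open>x \<notin> M \<union> f -` M \<union> f ` M\<close> by blast
  qed
  with \<open>M \<in> ?\<M>\<close> that show ?thesis
    by blast
qed

lemma moved_points_three_displaceable:
  assumes "G \<subseteq> X \<times> X" "Id_on X \<subseteq> G" "sym G"
  obtains A B C where "Domain (G - Id) = A \<union> B \<union> C"
    "displaceable X G A" "displaceable X G B" "displaceable X G C"
proof -
  let ?D = "Domain (G - Id)"
  define f where "f x = (SOME y. (x, y) \<in> G \<and> y \<noteq> x)" for x
  have f: "(x, f x) \<in> G" "f x \<noteq> x" if "x \<in> ?D" for x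
    using someI_ex[of "\<lambda>y. (x, y) \<in> G \<and> y \<noteq> x"] that unfolding f_def by auto
  obtain M where M: "M \<subseteq> ?D" "M \<inter> f ` M = {}" "?D \<subseteq> M \<union> f -` M \<union> f ` M"
    using fixpoint_free_three_cover[of ?D f] f(2) by blast
  have DX: "?D \<subseteq> X" and close: "\<And>x. x \<in> ?D \<Longrightarrow> f x \<in> X \<and> (f x, x) \<in> G"
    using assms(1,3) f(1) unfolding sym_def by blast+
  show ?thesis
  proof
    show "?D = M \<union> (?D \<inter> f -` M) \<union> (?D \<inter> f ` M)"
      using M by blast
    show "displaceable X G M"
      using displaceableI[OF assms(2), of M f] M(1,2) DX close by blast
    have "f ` (?D \<inter> f -` M) \<inter> (?D \<inter> f -` M) = {}"
      using M(2) by blast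
    then show "displaceable X G (?D \<inter> f -` M)"
      using displaceableI[OF assms(2), of "?D \<inter> f -` M" f] DX close by blast
    let ?g = "inv_into M f"
    have g: "?g y \<in> M" "f (?g y) = y" if "y \<in> f ` M" for y
      using that by (auto simp: inv_into_into f_inv_into_f)
    have "?g y \<in> X \<and> (?g y, y) \<in> G" if "y \<in> ?D \<inter> f ` M" for y
      using g[of y] that M(1) DX f(1)[of "?g y"] by auto
    moreover have "?g ` (?D \<inter> f ` M) \<inter> (?D \<inter> f ` M) = {}"
      using g M(2) by blast
    ultimately show "displaceable X G (?D \<inter> f ` M)"
      using displaceableI[OF assms(2), of "?D \<inter> f ` M" ?g] DX by blast
  qed
qed

lemma moved_points_bounded:
  assumes cs: "coarse_structure X \<E>" and "X \<noteq> {}"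
    and cs': "coarse_structure X \<E>'"
    and same: "\<forall>Y. Y \<subseteq> X \<longrightarrow> (bounded_in X \<E>' Y \<longleftrightarrow> bounded_in X \<E> Y)"
    and inc: "\<forall>p\<in>sharp_ultrafilters X \<E>. \<forall>q\<in>sharp_ultrafilters X \<E>. p \<noteq> q \<longrightarrow> incomparable X p q"
    and "G \<in> \<E>'" "sym G"
  shows "bounded_in X \<E> (Domain (G - Id))"
proof (rule ccontr)
  assume unbounded: "\<not> bounded_in X \<E> (Domain (G - Id))"
  have "G \<subseteq> X \<times> X" "Id_on X \<subseteq> G"
    using coarse_structure_subset[OF cs'] coarse_structure_Id_on_subset[OF cs'] \<open>G \<in> \<E>'\<close> by blast+
  then obtain A B C where ABC: "Domain (G - Id) = A \<union> B \<union> C"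
    "displaceable X G A" "displaceable X G B" "displaceable X G C"
    using \<open>sym G\<close> by (rule moved_points_three_displaceable)
  have "Domain (G - Id) \<subseteq> X"
    using \<open>G \<subseteq> X \<times> X\<close> by blast
  then obtain p where p: "p \<in> sharp_ultrafilters X \<E>" "A \<union> B \<union> C \<in> p"
    using unbounded_subset_in_sharp_ultrafilter[OF cs \<open>X \<noteq> {}\<close> _ unbounded] ABC(1) by metis
  have "A \<union> B \<subseteq> X" "C \<subseteq> X"
    using \<open>Domain (G - Id) \<subseteq> X\<close> ABC(1) by blast+
  then have "A \<in> p \<or> B \<in> p \<or> C \<in> p"
    using ultrafilter_on_Un p unfolding sharp_ultrafilters_def by blast
  then show False
    using sharp_ultrafilter_not_displaceable[OF cs' same inc \<open>G \<in> \<E>'\<close> p(1)] ABC(2-4) by blast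
qed

text \<open>The case \<open>X = {}\<close> is split off
  because there no set, not even \<open>{}\<close>, is bounded.\<close>

theorem proposition2:
  fixes X :: "'a set" and \<E> :: "('a \<times> 'a) set set"
  assumes "coarse_structure X \<E>"
    and "\<not> bounded_in X \<E> X"
    and "discrete_ballean X \<E>"
    and "\<forall>p\<in>sharp_ultrafilters X \<E>. \<forall>q\<in>sharp_ultrafilters X \<E>. p \<noteq> q \<longrightarrow> incomparable X p q"
  shows "relatively_maximal X \<E>"
  unfolding relatively_maximal_def
proof (intro allI impI subsetI)
  fix \<E>' E
  assume "coarse_structure X \<E>' \<and> (\<forall>Y. Y \<subseteq> X \<longrightarrow> (bounded_in X \<E>' Y \<longleftrightarrow> bounded_in X \<E> Y))"
  then have cs': "coarse_structure X \<E>'"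
    and same: "\<forall>Y. Y \<subseteq> X \<longrightarrow> (bounded_in X \<E>' Y \<longleftrightarrow> bounded_in X \<E> Y)"
    by blast+
  assume "E \<in> \<E>'"
  have "E \<subseteq> X \<times> X" "Id_on X \<subseteq> E"
    using coarse_structure_subset[OF cs'] coarse_structure_Id_on_subset[OF cs'] \<open>E \<in> \<E>'\<close> by blast+
  show "E \<in> \<E>"
  proof (cases "X = {}")
    case True
    then show ?thesis
      using \<open>E \<subseteq> X \<times> X\<close> coarse_structure_Id_on[OF assms(1)] by simp
  next
    case False
    let ?G = "E \<union> E\<inverse>"
    have "?G \<in> \<E>'" "sym ?G"
      using coarse_structure_Un[OF cs' \<open>E \<in> \<E>'\<close> coarse_structure_converse[OF cs' \<open>E \<in> \<E>'\<close>]]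
      by (auto simp: sym_def)
    then have "bounded_in X \<E> (Domain (?G - Id))"
      using moved_points_bounded[OF assms(1) False cs' same assms(4)] by blast
    moreover have "E \<subseteq> Id_on X \<union> Domain (?G - Id) \<times> Domain (?G - Id)"
      using \<open>E \<subseteq> X \<times> X\<close> by auto
    ultimately show ?thesis
      using entourage_in_if_off_diagonal_bounded[OF assms(1) \<open>Id_on X \<subseteq> E\<close>] by blast
  qed
qed

end
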